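(* Let $W$ be an $\epsilon$-spectral cluster of $G_0$ and let $A\subseteq V_0$ be closed in $G_0$ with $\mathrm{vol}_{G_0}(W\cap A)\ge\frac23\mathrm{vol}_{G_0}(W)$. Then $A$ dominates $W$, i.e. $\mathrm{vol}_{G_0}(W\cap A)>(1-3\epsilon)\mathrm{vol}_{G_0}(W)$.
   Context: Standing setting: $G_0=(V_0,E_0)$ is a finite simple undirected graph and $0<\epsilon\le 1/2000000$. For a graph $H$, $d_H(v)$ is the degree, $\mathrm{vol}_H(S)=\sum_{v\in S}d_H(v)$, $E(S,T)$ is the set of edges with one endpoint in $S$ and the other in $T$, $\partial_H S=E(S,V(H)\setminus S)$. For $V\subseteq V_0$, $G_0|V$ is the induced subgraph. An $\epsilon$-spectral cluster of $G_0$ is $W\subseteq V_0$ with $\mathrm{vol}_{G_0}(W)>0$, $|\partial_{G_0}W|\le\epsilon\,\mathrm{vol}_{G_0}(W)$, and for every $A\subseteq W$ with $r=\mathrm{vol}_{G_0}(A)/\mathrm{vol}_{G_0}(W)$, $|E(A,W\setminus A)|\ge(r(1-r)-\epsilon)\mathrm{vol}_{G_0}(W)$. A set $A\subseteq V(H)$ is closed in $H$ if no $v\in V(H)\setminus A$ with $d_H(v)>0$ has at least $\frac59 d_H(v)$ of its $H$-neighbors in $A$. A set $A\subseteq V_0$ dominates $W$ if $\mathrm{vol}_{G_0}(W\cap A)>(1-3\epsilon)\mathrm{vol}_{G_0}(W)$. *)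

theory Defs
  imports Complex_Main
begin

definition simple_graph :: "'a set \<Rightarrow> 'a set set \<Rightarrow> bool" where
  "simple_graph V E \<longleftrightarrow> finite V \<and> (\<forall>e\<in>E. e \<subseteq> V \<and> card e = 2)"

definition neighbors :: "'a set set \<Rightarrow> 'a \<Rightarrow> 'a set" where
  "neighbors E v = {u. {u, v} \<in> E}"

definition degree :: "'a set set \<Rightarrow> 'a \<Rightarrow> nat" where
  "degree E v = card {e\<in>E. v \<in> e}"

definition vol :: "'a set set \<Rightarrow> 'a set \<Rightarrow> nat" where
  "vol E S = (\<Sum>v\<in>S. degree E v)"

definition cut_edges :: "'a set set \<Rightarrow> 'a set \<Rightarrow> 'a set \<Rightarrow> 'a set set" where
  "cut_edges E S T = {e\<in>E. \<exists>u v. e = {u, v} \<and> u \<in> S \<and> v \<in> T}"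

definition boundary :: "'a set \<Rightarrow> 'a set set \<Rightarrow> 'a set \<Rightarrow> 'a set set" where
  "boundary V E S = cut_edges E S (V - S)"

definition spectral_cluster :: "real \<Rightarrow> 'a set \<Rightarrow> 'a set set \<Rightarrow> 'a set \<Rightarrow> bool" where
  "spectral_cluster \<epsilon> V E W \<longleftrightarrow>
     W \<subseteq> V \<and> vol E W > 0 \<and>
     real (card (boundary V E W)) \<le> \<epsilon> * real (vol E W) \<and>
     (\<forall>A\<subseteq>W. let r = real (vol E A) / real (vol E W) in
        real (card (cut_edges E A (W - A))) \<ge> (r * (1 - r) - \<epsilon>) * real (vol E W))"

definition closed_in_graph :: "'a set \<Rightarrow> 'a set set \<Rightarrow> 'a set \<Rightarrow> bool" where
  "closed_in_graph V E A \<longleftrightarrow> A \<subseteq> V \<and>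
     \<not> (\<exists>v\<in>V - A. degree E v > 0 \<and>
          real (card (neighbors E v \<inter> A)) \<ge> 5/9 * real (degree E v))"

definition dominates :: "real \<Rightarrow> 'a set set \<Rightarrow> 'a set \<Rightarrow> 'a set \<Rightarrow> bool" where
  "dominates \<epsilon> E A W \<longleftrightarrow> real (vol E (W \<inter> A)) > (1 - 3 * \<epsilon>) * real (vol E W)"

end

theory Submission
  imports Defs
begin

text \<open>
  Put \<open>r = vol(W \<inter> A) / vol W\<close>. Every edge leaving \<open>W \<inter> A\<close> inside \<open>W\<close> ends at a vertex
  \<open>v \<in> W - A\<close>, and closedness of \<open>A\<close> lets such a \<open>v\<close> have fewer than \<open>5/9 d(v)\<close>
  neighbours in \<open>A\<close>; so that cut has at most \<open>5/9 (1 - r) vol W\<close> edges. The spectral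
  cluster property bounds it below by \<open>(r (1 - r) - \<epsilon>) vol W\<close>, whence
  \<open>(1 - r)(r - 5/9) \<le> \<epsilon>\<close>. For \<open>r \<ge> 2/3\<close> this first gives \<open>1 - r \<le> 9\<epsilon>\<close>, hence
  \<open>r > 8/9\<close>, and then \<open>1 - r < 3\<epsilon>\<close>.
\<close>

lemma finite_edges_if_simple_graph:
  assumes "simple_graph V E"
  shows "finite E"
proof (rule finite_subset)
  show "E \<subseteq> Pow V" using assms unfolding simple_graph_def by auto
  show "finite (Pow V)" using assms unfolding simple_graph_def by simp
qed

lemma neighbors_empty_if_degree_zero:
  assumes "finite E" "degree E v = 0"
  shows "neighbors E v = {}"
  using assms unfolding degree_def neighbors_def by auto

lemma vol_Int_Diff:
  assumes "finite W"
  shows "vol E W = vol E (W \<inter> A) + vol E (W - A)"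
  unfolding vol_def using assms by (metis Int_Diff_Un Int_Diff_disjoint finite_Int finite_Diff sum.union_disjoint)

lemma card_cut_edges_le_sum_neighbors:
  assumes "finite S" "finite T"
  shows "card (cut_edges E S T) \<le> (\<Sum>v\<in>T. card (neighbors E v \<inter> S))"
proof -
  have "cut_edges E S T \<subseteq> (\<Union>v\<in>T. (\<lambda>u. {u, v}) ` (neighbors E v \<inter> S))"
    unfolding cut_edges_def neighbors_def by auto
  then have "card (cut_edges E S T) \<le> card (\<Union>v\<in>T. (\<lambda>u. {u, v}) ` (neighbors E v \<inter> S))"
    by (rule card_mono[rotated]) (use assms in auto)
  also have "\<dots> \<le> (\<Sum>v\<in>T. card ((\<lambda>u. {u, v}) ` (neighbors E v \<inter> S)))"
    by (rule card_UN_le) (use assms in auto)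
  also have "\<dots> \<le> (\<Sum>v\<in>T. card (neighbors E v \<inter> S))"
    by (intro sum_mono card_image_le) (use assms in auto)
  finally show ?thesis .
qed

lemma closed_in_graph_neighbors_le:
  assumes "simple_graph V E" "closed_in_graph V E A" "v \<in> V - A" "B \<subseteq> A"
  shows "real (card (neighbors E v \<inter> B)) \<le> 5/9 * real (degree E v)"
proof (cases "degree E v = 0")
  case True
  then show ?thesis
    using neighbors_empty_if_degree_zero[OF finite_edges_if_simple_graph[OF assms(1)] True] by simp
next
  case False
  have "finite A" using assms(1,2) finite_subset
    unfolding simple_graph_def closed_in_graph_def by blast
  then have "card (neighbors E v \<inter> B) \<le> card (neighbors E v \<inter> A)"
    using assms(4) by (intro card_mono) auto
  moreover have "\<not> 5/9 * real (degree E v) \<le> real (card (neighbors E v \<inter> A))"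
    using assms(2,3) False unfolding closed_in_graph_def by blast
  ultimately show ?thesis by linarith
qed

lemma card_cut_edges_closed_le:
  assumes "simple_graph V E" "closed_in_graph V E A" "W \<subseteq> V"
  shows "real (card (cut_edges E (W \<inter> A) (W - A))) \<le> 5/9 * real (vol E (W - A))"
proof -
  have "finite W" using assms(1,3) finite_subset unfolding simple_graph_def by blast
  then have "real (card (cut_edges E (W \<inter> A) (W - A)))
      \<le> (\<Sum>v\<in>W - A. real (card (neighbors E v \<inter> (W \<inter> A))))"
    using card_cut_edges_le_sum_neighbors[of "W \<inter> A" "W - A" E] by (simp flip: of_nat_sum)
  also have "\<dots> \<le> (\<Sum>v\<in>W - A. 5/9 * real (degree E v))"
    using assms(3) by (intro sum_mono closed_in_graph_neighbors_le[OF assms(1,2)]) auto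
  also have "\<dots> = 5/9 * real (vol E (W - A))"
    unfolding vol_def by (simp add: sum_distrib_left)
  finally show ?thesis .
qed

lemma fraction_gt_if_product_le:
  fixes r e :: real
  assumes "2/3 \<le> r" "r \<le> 1" "0 < e" "e < 1/81"
    and "(1 - r) * (r - 5/9) \<le> e"
  shows "r > 1 - 3 * e"
proof (cases "r = 1")
  case False
  then have "1 - r > 0" using assms(2) by simp
  have "(1 - r) * (1/9) \<le> (1 - r) * (r - 5/9)"
    using \<open>1 - r > 0\<close> assms(1) by (intro mult_left_mono) auto
  then have "1 - r \<le> 9 * e" using assms(5) by simp
  then have "r > 8/9" using assms(4) by simp
  then have "(1 - r) * (1/3) < (1 - r) * (r - 5/9)"
    using \<open>1 - r > 0\<close> by (intro mult_strict_left_mono) auto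
  then show ?thesis using assms(5) by simp
qed (use assms in simp)

lemma fraction_gt_if_cut_bounds:
  fixes x y c e :: real
  assumes "0 \<le> y" "0 < x + y" "2/3 * (x + y) \<le> x" "0 < e" "e < 1/81"
    and "(x / (x + y) * (1 - x / (x + y)) - e) * (x + y) \<le> c" "c \<le> 5/9 * y"
  shows "x > (1 - 3 * e) * (x + y)"
proof -
  define r where "r = x / (x + y)"
  have one_minus_r: "1 - r = y / (x + y)"
    using assms(2) unfolding r_def by (simp add: field_simps)
  have "(r * (1 - r) - e) * (x + y) \<le> 5/9 * y"
    using assms(6,7) unfolding r_def[symmetric] by linarith
  also have "\<dots> = 5/9 * (1 - r) * (x + y)"
    using one_minus_r assms(2) by (simp add: field_simps)
  finally have "(r * (1 - r) - e) * (x + y) \<le> 5/9 * (1 - r) * (x + y)" .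
  then have "r * (1 - r) - e \<le> 5/9 * (1 - r)"
    using assms(2) by (simp add: mult_le_cancel_right)
  then have "(1 - r) * (r - 5/9) \<le> e"
    by (simp add: field_simps)
  moreover have "2/3 \<le> r" "r \<le> 1"
    using assms(1-3) unfolding r_def by (simp_all add: field_simps)
  ultimately have "r > 1 - 3 * e"
    using fraction_gt_if_product_le assms(4,5) by blast
  then show ?thesis using assms(2) unfolding r_def by (simp add: field_simps)
qed

theorem mainTheorem4:
  fixes V0 :: "'a set" and E0 :: "'a set set" and \<epsilon> :: real and W A :: "'a set"
  assumes "simple_graph V0 E0"
    and "0 < \<epsilon>" and "\<epsilon> \<le> 1 / 2000000"
    and "spectral_cluster \<epsilon> V0 E0 W"
    and "closed_in_graph V0 E0 A"
    and "real (vol E0 (W \<inter> A)) \<ge> 2/3 * real (vol E0 W)"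
  shows "dominates \<epsilon> E0 A W"
proof -
  have "W \<subseteq> V0" and vol_pos: "vol E0 W > 0"
    using assms(4) unfolding spectral_cluster_def by auto
  then have vol_W: "vol E0 W = vol E0 (W \<inter> A) + vol E0 (W - A)"
    using assms(1) finite_subset vol_Int_Diff unfolding simple_graph_def by blast
  define x where "x = real (vol E0 (W \<inter> A))"
  define y where "y = real (vol E0 (W - A))"
  have vol_W_real: "real (vol E0 W) = x + y"
    unfolding x_def y_def vol_W by simp
  have "(real (vol E0 (W \<inter> A)) / real (vol E0 W)
        * (1 - real (vol E0 (W \<inter> A)) / real (vol E0 W)) - \<epsilon>) * real (vol E0 W)
      \<le> real (card (cut_edges E0 (W \<inter> A) (W - W \<inter> A)))"
    using assms(4) unfolding spectral_cluster_def Let_def by (meson Int_lower1)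
  moreover have "W - W \<inter> A = W - A" by blast
  ultimately have spectral: "(x / (x + y) * (1 - x / (x + y)) - \<epsilon>) * (x + y)
      \<le> real (card (cut_edges E0 (W \<inter> A) (W - A)))"
    unfolding vol_W_real x_def by simp
  have "x > (1 - 3 * \<epsilon>) * (x + y)"
  proof (rule fraction_gt_if_cut_bounds[OF _ _ _ assms(2) _ spectral])
    show "real (card (cut_edges E0 (W \<inter> A) (W - A))) \<le> 5/9 * y"
      unfolding y_def by (rule card_cut_edges_closed_le[OF assms(1,5) \<open>W \<subseteq> V0\<close>])
  qed (use vol_pos assms(3,6) vol_W_real x_def y_def in auto)
  then have "real (vol E0 (W \<inter> A)) > (1 - 3 * \<epsilon>) * real (vol E0 W)"
    unfolding vol_W_real x_def .
  then show ?thesis unfolding dominates_def .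
qed

end
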